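(* Let $n>1$, $c=0$ and $\rho>0$. Let $(\mathfrak{l},g_\rho^c)$ be the metric Lie algebra described in the context. Then $(\mathfrak{l},g_\rho^c)$ is a solvsoliton: there exist $\lambda\in\mathbb{R}$ and a derivation $D$ of $\mathfrak{l}$ such that the Ricci endomorphism $\mathrm{ric}$ of the left-invariant metric defined by $g_\rho^c$ on the simply connected Lie group with Lie algebra $\mathfrak{l}$ satisfies $\mathrm{ric}=\lambda\,\mathrm{Id}+D$.
   Context: Fix $n\ge 2$, $\rho>0$, $c\ge 0$. The real Lie algebra $\mathfrak{l}$ has basis $B_a^R,B_a^I$ ($a=1,\dots,n-1$), $e_k,f_k$ ($k=0,\dots,n-1$), $Z$. Its brackets are as follows (all brackets of basis elements not listed, up to antisymmetry, are zero). On $\mathfrak{b}=\mathrm{span}\{B_a^R,B_a^I\}$: $[B_1^R,B_1^I]=2B_1^I$, and for $a\in\{2,\dots,n-1\}$: $[B_1^R,B_a^R]=B_a^R$, $[B_1^R,B_a^I]=B_a^I$, $[B_a^R,B_a^I]=\tfrac12 B_1^I$. On $\mathfrak{heis}_{2n+1}=\mathrm{span}\{e_k,f_k,Z\}$: $[e_0,f_0]=Z$, $[e_a,f_a]=-Z$ for $a\ge 1$. Also $[\mathfrak{b},Z]=0$. The mixed brackets are described after complex-bilinear extension, with $E_k:=e_k-if_k$ and $[B,\bar E_k]=\overline{[B,E_k]}$ for $B\in\mathfrak{b}$ real: for $k=0,\dots,n-1$ and $a\in\{2,\dots,n-1\}$, $[B_1^R,E_k]=-\delta_{k0}E_1-\delta_{k1}E_0$,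 $[B_a^R,E_k]=-\tfrac12(\delta_{k0}+\delta_{k1})E_a-\tfrac12\delta_{ka}(E_0-E_1)$, $[B_1^I,E_k]=-i(\delta_{k0}+\delta_{k1})(E_0-E_1)$, $[B_a^I,E_k]=\tfrac{i}{2}(\delta_{k0}+\delta_{k1})E_a-\tfrac{i}{2}\delta_{ka}(E_0-E_1)$. (Here $\mathfrak{b}$ is the Iwasawa subalgebra of $\mathfrak{su}(1,n-1)$ acting on $\mathfrak{heis}_{2n+1}=\mathbb{C}^n\oplus\mathbb{R}Z$ via the standard representation.) The inner product $g_\rho^c$ on $\mathfrak{l}$ is given by $g(B_1^R,B_1^R)=\frac{\rho+c}{\rho}$, $g(B_1^I,B_1^I)=\frac{(\rho+c)^3}{\rho^2(\rho+2c)}$, $g(B_a^R,B_a^R)=g(B_a^I,B_a^I)=\frac{\rho+c}{4\rho}$ ($a\ge2$), $g(e_0,e_0)=g(f_0,f_0)=\frac{\rho+2c}{4\rho^2}$, $g(e_a,e_a)=g(f_a,f_a)=\frac{1}{4\rho}$ ($a\ge1$), $g(Z,Z)=\frac{\rho+c}{4\rho^2(\rho+2c)}$, $g(B_1^I,Z)=-\frac{c(\rho+c)}{2\rho^2(\rho+2c)}$, and all other pairs of distinct basis vectors orthogonal. This is the left-invariant metric on the group $L$ with Lie algebra $\mathfrak{l}$ corresponding to the metric induced on the level sets $\{\rho\}\times K$ of the one-loop deformation (parameter $c$) of the quaternionic Kähler symmetric space $\mathrm{SU}(n,2)/\mathrm{S}(\mathrm{U}(n)\times\mathrm{U}(2))$,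 on which $L$ acts simply transitively and isometrically. A left-invariant metric on a simply connected solvable Lie group is a solvsoliton if $\mathrm{ric}=\lambda\mathrm{Id}+D$ with $\lambda\in\mathbb{R}$, $D$ a derivation of the Lie algebra. *)

theory Defs
  imports Complex_Main
begin

text \<open>Basis labels of the Lie algebra l: BR a = B_a^R, BI a = B_a^I (1 <= a <= n-1),
  Ee k = e_k, Ff k = f_k (0 <= k <= n-1), Zz = Z.\<close>

datatype idx = BR nat | BI nat | Ee nat | Ff nat | Zz

definition lbasis :: "nat \<Rightarrow> idx set" where
  "lbasis n = {BR a | a. 1 \<le> a \<and> a \<le> n - 1} \<union> {BI a | a. 1 \<le> a \<and> a \<le> n - 1}
     \<union> {Ee k | k. k < n} \<union> {Ff k | k. k < n} \<union> {Zz}"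

definition lvec :: "nat \<Rightarrow> (idx \<Rightarrow> real) set" where
  "lvec n = {v. \<forall>i. i \<notin> lbasis n \<longrightarrow> v i = 0}"

definition unitv :: "idx \<Rightarrow> idx \<Rightarrow> real" where
  "unitv i = (\<lambda>j. if j = i then 1 else 0)"

text \<open>Complex coefficient of E_j in [B, E_k] (B a basis element of b).\<close>
fun alpha :: "idx \<Rightarrow> nat \<Rightarrow> nat \<Rightarrow> complex" where
  "alpha (BR a) k j =
     (if a = 1 then - (if k = 0 \<and> j = 1 then 1 else 0) - (if k = 1 \<and> j = 0 then 1 else 0)
      else - (1/2) * (if (k = 0 \<or> k = 1) \<and> j = a then 1 else 0)
           - (1/2) * (if k = a \<and> j = 0 then 1 else 0)
           + (1/2) * (if k = a \<and> j = 1 then 1 else 0))"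
| "alpha (BI a) k j =
     (if a = 1 then - \<i> * (if (k = 0 \<or> k = 1) \<and> j = 0 then 1 else 0)
                   + \<i> * (if (k = 0 \<or> k = 1) \<and> j = 1 then 1 else 0)
      else (\<i>/2) * (if (k = 0 \<or> k = 1) \<and> j = a then 1 else 0)
           - (\<i>/2) * (if k = a \<and> j = 0 then 1 else 0)
           + (\<i>/2) * (if k = a \<and> j = 1 then 1 else 0))"
| "alpha _ k j = 0"

text \<open>Real form: since [B,E_k] = [B,e_k] - i [B,f_k] and
  (a+ib)(e_j - i f_j) = (a e_j + b f_j) + i (b e_j - a f_j).\<close>
definition mixE :: "idx \<Rightarrow> nat \<Rightarrow> idx \<Rightarrow> real" where
  "mixE B k = (\<lambda>v. case v of Ee j \<Rightarrow> Re (alpha B k j) | Ff j \<Rightarrow> Im (alpha B k j) | _ \<Rightarrow> 0)"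

definition mixF :: "idx \<Rightarrow> nat \<Rightarrow> idx \<Rightarrow> real" where
  "mixF B k = (\<lambda>v. case v of Ee j \<Rightarrow> - Im (alpha B k j) | Ff j \<Rightarrow> Re (alpha B k j) | _ \<Rightarrow> 0)"

text \<open>Listed brackets (one orientation each).\<close>
fun sc :: "idx \<Rightarrow> idx \<Rightarrow> idx \<Rightarrow> real" where
  "sc (BR a) (BI b) =
     (if a = 1 \<and> b = 1 then (\<lambda>v. 2 * unitv (BI 1) v)
      else if a \<ge> 2 \<and> b = a then (\<lambda>v. 1/2 * unitv (BI 1) v)
      else if a = 1 \<and> b \<ge> 2 then unitv (BI b)
      else (\<lambda>_. 0))"
| "sc (BR a) (BR b) = (if a = 1 \<and> b \<ge> 2 then unitv (BR b) else (\<lambda>_. 0))"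
| "sc (Ee a) (Ff b) =
     (if a = b then (if a = 0 then unitv Zz else (\<lambda>v. - unitv Zz v)) else (\<lambda>_. 0))"
| "sc (BR a) (Ee k) = mixE (BR a) k"
| "sc (BI a) (Ee k) = mixE (BI a) k"
| "sc (BR a) (Ff k) = mixF (BR a) k"
| "sc (BI a) (Ff k) = mixF (BI a) k"
| "sc _ _ = (\<lambda>_. 0)"

definition bb :: "idx \<Rightarrow> idx \<Rightarrow> idx \<Rightarrow> real" where
  "bb i j = (\<lambda>v. sc i j v - sc j i v)"

definition lbr :: "nat \<Rightarrow> (idx \<Rightarrow> real) \<Rightarrow> (idx \<Rightarrow> real) \<Rightarrow> idx \<Rightarrow> real" where
  "lbr n x y = (\<lambda>v. \<Sum>i\<in>lbasis n. \<Sum>j\<in>lbasis n. x i * y j * bb i j v)"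

fun gram :: "real \<Rightarrow> real \<Rightarrow> idx \<Rightarrow> idx \<Rightarrow> real" where
  "gram \<rho> c (BR a) (BR b) =
     (if a \<noteq> b then 0 else if a = 1 then (\<rho> + c) / \<rho> else (\<rho> + c) / (4 * \<rho>))"
| "gram \<rho> c (BI a) (BI b) =
     (if a \<noteq> b then 0 else if a = 1 then (\<rho> + c) ^ 3 / (\<rho> ^ 2 * (\<rho> + 2 * c))
      else (\<rho> + c) / (4 * \<rho>))"
| "gram \<rho> c (Ee a) (Ee b) =
     (if a \<noteq> b then 0 else if a = 0 then (\<rho> + 2 * c) / (4 * \<rho> ^ 2) else 1 / (4 * \<rho>))"
| "gram \<rho> c (Ff a) (Ff b) =
     (if a \<noteq> b then 0 else if a = 0 then (\<rho> + 2 * c) / (4 * \<rho> ^ 2) else 1 / (4 * \<rho>))"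
| "gram \<rho> c Zz Zz = (\<rho> + c) / (4 * \<rho> ^ 2 * (\<rho> + 2 * c))"
| "gram \<rho> c (BI a) Zz = (if a = 1 then - (c * (\<rho> + c)) / (2 * \<rho> ^ 2 * (\<rho> + 2 * c)) else 0)"
| "gram \<rho> c Zz (BI a) = (if a = 1 then - (c * (\<rho> + c)) / (2 * \<rho> ^ 2 * (\<rho> + 2 * c)) else 0)"
| "gram \<rho> c _ _ = 0"

definition gmet :: "nat \<Rightarrow> real \<Rightarrow> real \<Rightarrow> (idx \<Rightarrow> real) \<Rightarrow> (idx \<Rightarrow> real) \<Rightarrow> real" where
  "gmet n \<rho> c x y = (\<Sum>i\<in>lbasis n. \<Sum>j\<in>lbasis n. x i * y j * gram \<rho> c i j)"

definition nabla :: "nat \<Rightarrow> real \<Rightarrow> real \<Rightarrow> (idx \<Rightarrow> real) \<Rightarrow> (idx \<Rightarrow> real) \<Rightarrow> idx \<Rightarrow> real" where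
  "nabla n \<rho> c x y = (THE w. w \<in> lvec n \<and> (\<forall>z\<in>lvec n.
      2 * gmet n \<rho> c w z = gmet n \<rho> c (lbr n x y) z - gmet n \<rho> c (lbr n y z) x
                            + gmet n \<rho> c (lbr n z x) y))"

definition riem :: "nat \<Rightarrow> real \<Rightarrow> real \<Rightarrow> (idx \<Rightarrow> real) \<Rightarrow> (idx \<Rightarrow> real) \<Rightarrow> (idx \<Rightarrow> real) \<Rightarrow> idx \<Rightarrow> real" where
  "riem n \<rho> c x y z = (\<lambda>v. nabla n \<rho> c x (nabla n \<rho> c y z) v - nabla n \<rho> c y (nabla n \<rho> c x z) v
                           - nabla n \<rho> c (lbr n x y) z v)"

definition ricci :: "nat \<Rightarrow> real \<Rightarrow> real \<Rightarrow> (idx \<Rightarrow> real) \<Rightarrow> (idx \<Rightarrow> real) \<Rightarrow> real" where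
  "ricci n \<rho> c y z = (\<Sum>i\<in>lbasis n. riem n \<rho> c (unitv i) y z i)"

definition ricop :: "nat \<Rightarrow> real \<Rightarrow> real \<Rightarrow> (idx \<Rightarrow> real) \<Rightarrow> idx \<Rightarrow> real" where
  "ricop n \<rho> c y = (THE w. w \<in> lvec n \<and> (\<forall>z\<in>lvec n. gmet n \<rho> c w z = ricci n \<rho> c y z))"

definition is_derivation :: "nat \<Rightarrow> ((idx \<Rightarrow> real) \<Rightarrow> idx \<Rightarrow> real) \<Rightarrow> bool" where
  "is_derivation n D \<longleftrightarrow>
     (\<forall>x\<in>lvec n. D x \<in> lvec n) \<and>
     (\<forall>x\<in>lvec n. \<forall>y\<in>lvec n. \<forall>a b :: real.
        D (\<lambda>v. a * x v + b * y v) = (\<lambda>v. a * D x v + b * D y v)) \<and>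
     (\<forall>x\<in>lvec n. \<forall>y\<in>lvec n. D (lbr n x y) = (\<lambda>v. lbr n (D x) y v + lbr n x (D y) v))"

end

theory Submission
  imports Defs
begin

text \<open>At \<open>c = 0\<close> the basis of \<open>l\<close> is orthogonal, so the Levi-Civita connection and the Ricci
  tensor are given by Christoffel symbols that the Koszul formula expresses through the structure
  constants. For every \<open>a \<ge> 2\<close> the span of \<open>B_a^R, B_a^I, e_a, f_a\<close> is the odd part of a
  \<open>Z/2\<close>-grading of \<open>l\<close> compatible with bracket and metric. Hence the Ricci tensor is block
  diagonal, and in a Ricci coefficient only the seven remaining basis vectors and the block of its
  arguments contribute individually, all other blocks contributing one common amount. A finite
  computation then shows that \<open>ric\<close> is diagonal with eigenvalues \<open>-2(n+2)\<close> on \<open>b\<close>, \<open>-2\<close> on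
  \<open>C^n\<close> and \<open>2n\<close> on \<open>Z\<close>: this is \<open>-2(n+2) Id + D\<close>, where \<open>D\<close> is \<open>2n+2\<close> times the derivation
  grading \<open>l = b + C^n + RZ\<close> in degrees 0, 1, 2.\<close>

lemma lbasis_eq:
  "lbasis n = {Zz} \<union> BR ` {1..n-1} \<union> BI ` {1..n-1} \<union> Ee ` {..<n} \<union> Ff ` {..<n}"
  unfolding lbasis_def by auto

lemma finite_lbasis [simp]: "finite (lbasis n)"
  unfolding lbasis_eq by auto

lemma unitv_in_lvec: "i \<in> lbasis n \<Longrightarrow> unitv i \<in> lvec n"
  unfolding lvec_def unitv_def by auto

lemma sum_rotate3:
  "(\<Sum>i\<in>A. \<Sum>j\<in>B. \<Sum>k\<in>C. f i j k) = (\<Sum>k\<in>C. \<Sum>i\<in>A. \<Sum>j\<in>B. f i j k)"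
proof -
  have "(\<Sum>i\<in>A. \<Sum>j\<in>B. \<Sum>k\<in>C. f i j k) = (\<Sum>i\<in>A. \<Sum>k\<in>C. \<Sum>j\<in>B. f i j k)"
    by (rule sum.cong[OF refl], rule sum.swap)
  also have "\<dots> = (\<Sum>k\<in>C. \<Sum>i\<in>A. \<Sum>j\<in>B. f i j k)"
    by (rule sum.swap)
  finally show ?thesis .
qed

lemma sum_swap_pairs:
  "(\<Sum>i\<in>A. \<Sum>j\<in>A. \<Sum>p\<in>A. \<Sum>q\<in>A. f i j p q) =
    (\<Sum>p\<in>A. \<Sum>q\<in>A. \<Sum>i\<in>A. \<Sum>j\<in>A. f i j p q)"
proof -
  have "(\<Sum>i\<in>A. \<Sum>j\<in>A. \<Sum>p\<in>A. \<Sum>q\<in>A. f i j p q) =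
      (\<Sum>p\<in>A. \<Sum>i\<in>A. \<Sum>j\<in>A. \<Sum>q\<in>A. f i j p q)"
    by (rule sum_rotate3)
  also have "\<dots> = (\<Sum>p\<in>A. \<Sum>q\<in>A. \<Sum>i\<in>A. \<Sum>j\<in>A. f i j p q)"
    by (rule sum.cong[OF refl], rule sum_rotate3)
  finally show ?thesis .
qed

definition gram_diag :: "real \<Rightarrow> idx \<Rightarrow> real" where
  "gram_diag \<rho> i = gram \<rho> 0 i i"

lemma gram_diag_simps:
  assumes "\<rho> > 0"
  shows "gram_diag \<rho> (BR a) = (if a = 1 then 1 else 1/4)"
    and "gram_diag \<rho> (BI a) = (if a = 1 then 1 else 1/4)"
    and "gram_diag \<rho> (Ee a) = 1 / (4 * \<rho>)"
    and "gram_diag \<rho> (Ff a) = 1 / (4 * \<rho>)"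
    and "gram_diag \<rho> Zz = 1 / (4 * \<rho>^2)"
  using assms by (auto simp: gram_diag_def power2_eq_square power3_eq_cube)

lemma gram_diag_pos: "\<rho> > 0 \<Longrightarrow> gram_diag \<rho> i > 0"
  by (cases i) (auto simp: gram_diag_simps)

lemma gram_diagonal: "gram \<rho> 0 i j = (if i = j then gram_diag \<rho> i else 0)"
  unfolding gram_diag_def by (cases i; cases j) auto

lemma gmet_diagonal: "gmet n \<rho> 0 x y = (\<Sum>i\<in>lbasis n. x i * y i * gram_diag \<rho> i)"
  unfolding gmet_def gram_diagonal by (simp add: if_distrib[of "\<lambda>t. _ * t"] cong: if_cong)

lemma gmet_unitv:
  assumes "k \<in> lbasis n"
  shows "gmet n \<rho> 0 w (unitv k) = w k * gram_diag \<rho> k"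
proof -
  have "gmet n \<rho> 0 w (unitv k) = (\<Sum>i\<in>lbasis n. if i = k then w k * gram_diag \<rho> k else 0)"
    unfolding gmet_diagonal unitv_def by (rule sum.cong) auto
  then show ?thesis using assms by simp
qed

lemma gmet_nondegenerate:
  assumes "\<rho> > 0" "v \<in> lvec n" "w \<in> lvec n"
    and "\<forall>z\<in>lvec n. gmet n \<rho> 0 v z = gmet n \<rho> 0 w z"
  shows "v = w"
proof
  fix k
  show "v k = w k"
  proof cases
    assume k: "k \<in> lbasis n"
    then have "v k * gram_diag \<rho> k = w k * gram_diag \<rho> k"
      using assms(4)[rule_format, OF unitv_in_lvec[OF k]] k by (simp add: gmet_unitv)
    then show ?thesis using gram_diag_pos[OF assms(1), of k] by simp
  next
    assume "k \<notin> lbasis n"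
    then show ?thesis using assms(2,3) by (simp add: lvec_def)
  qed
qed

text \<open>Koszul formula in the orthogonal basis: \<open>nabla_(e_i) e_j = (\<Sum>k. christoffel \<rho> i j k * e_k)\<close>.\<close>

definition christoffel :: "real \<Rightarrow> idx \<Rightarrow> idx \<Rightarrow> idx \<Rightarrow> real" where
  "christoffel \<rho> i j k =
     (gram_diag \<rho> k * bb i j k - gram_diag \<rho> i * bb j k i + gram_diag \<rho> j * bb k i j) / (2 * gram_diag \<rho> k)"

definition levi_civita :: "nat \<Rightarrow> real \<Rightarrow> (idx \<Rightarrow> real) \<Rightarrow> (idx \<Rightarrow> real) \<Rightarrow> idx \<Rightarrow> real" where
  "levi_civita n \<rho> x y = (\<lambda>k. if k \<in> lbasis n
     then \<Sum>i\<in>lbasis n. \<Sum>j\<in>lbasis n. x i * y j * christoffel \<rho> i j k else 0)"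

lemma gmet_lbr:
  "gmet n \<rho> 0 (lbr n x y) z =
     (\<Sum>k\<in>lbasis n. \<Sum>i\<in>lbasis n. \<Sum>j\<in>lbasis n. x i * y j * z k * (gram_diag \<rho> k * bb i j k))"
  unfolding gmet_diagonal lbr_def sum_distrib_right by (intro sum.cong refl) (simp add: mult_ac)

lemma koszul_levi_civita:
  assumes "\<rho> > 0"
  shows "2 * gmet n \<rho> 0 (levi_civita n \<rho> x y) z =
    gmet n \<rho> 0 (lbr n x y) z - gmet n \<rho> 0 (lbr n y z) x + gmet n \<rho> 0 (lbr n z x) y"
proof -
  let ?A = "lbasis n" and ?G = "gram_diag \<rho>"
  have "2 * (levi_civita n \<rho> x y k * z k * ?G k) = (\<Sum>i\<in>?A. \<Sum>j\<in>?A.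
      x i * y j * z k * (?G k * bb i j k) - x i * y j * z k * (?G i * bb j k i)
      + x i * y j * z k * (?G j * bb k i j))" if "k \<in> ?A" for k
  proof -
    have "?G k \<noteq> 0" using gram_diag_pos[OF assms, of k] by simp
    then show ?thesis
      using that unfolding levi_civita_def christoffel_def
      by (simp add: sum_distrib_left sum_distrib_right) (intro sum.cong refl; simp add: field_simps)
  qed
  then have "2 * gmet n \<rho> 0 (levi_civita n \<rho> x y) z = (\<Sum>k\<in>?A. \<Sum>i\<in>?A. \<Sum>j\<in>?A.
      x i * y j * z k * (?G k * bb i j k) - x i * y j * z k * (?G i * bb j k i)
      + x i * y j * z k * (?G j * bb k i j))"
    unfolding gmet_diagonal sum_distrib_left by (intro sum.cong refl) simp
  also have "\<dots> = gmet n \<rho> 0 (lbr n x y) z - gmet n \<rho> 0 (lbr n y z) x + gmet n \<rho> 0 (lbr n z x) y"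
  proof -
    have "gmet n \<rho> 0 (lbr n y z) x =
        (\<Sum>i\<in>?A. \<Sum>j\<in>?A. \<Sum>k\<in>?A. x i * y j * z k * (?G i * bb j k i))"
      by (simp add: gmet_lbr mult_ac)
    also have "\<dots> = (\<Sum>k\<in>?A. \<Sum>i\<in>?A. \<Sum>j\<in>?A. x i * y j * z k * (?G i * bb j k i))"
      by (rule sum_rotate3)
    finally have yzx: "gmet n \<rho> 0 (lbr n y z) x = \<dots>" .
    have "gmet n \<rho> 0 (lbr n z x) y =
        (\<Sum>j\<in>?A. \<Sum>k\<in>?A. \<Sum>i\<in>?A. x i * y j * z k * (?G j * bb k i j))"
      by (simp add: gmet_lbr mult_ac)
    also have "\<dots> = (\<Sum>i\<in>?A. \<Sum>j\<in>?A. \<Sum>k\<in>?A. x i * y j * z k * (?G j * bb k i j))"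
      by (rule sum_rotate3)
    also have "\<dots> = (\<Sum>k\<in>?A. \<Sum>i\<in>?A. \<Sum>j\<in>?A. x i * y j * z k * (?G j * bb k i j))"
      by (rule sum_rotate3)
    finally have zxy: "gmet n \<rho> 0 (lbr n z x) y = \<dots>" .
    show ?thesis
      unfolding yzx zxy by (simp add: gmet_lbr sum_subtractf sum.distrib)
  qed
  finally show ?thesis .
qed

lemma nabla_eq_levi_civita:
  assumes "\<rho> > 0"
  shows "nabla n \<rho> 0 x y = levi_civita n \<rho> x y"
  unfolding nabla_def
proof (rule the_equality)
  show "levi_civita n \<rho> x y \<in> lvec n \<and> (\<forall>z\<in>lvec n. 2 * gmet n \<rho> 0 (levi_civita n \<rho> x y) z =
      gmet n \<rho> 0 (lbr n x y) z - gmet n \<rho> 0 (lbr n y z) x + gmet n \<rho> 0 (lbr n z x) y)"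
    using koszul_levi_civita[OF assms] by (simp add: lvec_def levi_civita_def)
next
  fix w
  assume w: "w \<in> lvec n \<and> (\<forall>z\<in>lvec n. 2 * gmet n \<rho> 0 w z =
      gmet n \<rho> 0 (lbr n x y) z - gmet n \<rho> 0 (lbr n y z) x + gmet n \<rho> 0 (lbr n z x) y)"
  have "\<forall>z\<in>lvec n. gmet n \<rho> 0 w z = gmet n \<rho> 0 (levi_civita n \<rho> x y) z"
  proof
    fix z
    assume "z \<in> lvec n"
    with w have "2 * gmet n \<rho> 0 w z = 2 * gmet n \<rho> 0 (levi_civita n \<rho> x y) z"
      unfolding koszul_levi_civita[OF assms] by blast
    then show "gmet n \<rho> 0 w z = gmet n \<rho> 0 (levi_civita n \<rho> x y) z" by simp
  qed
  then show "w = levi_civita n \<rho> x y"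
    using w by (intro gmet_nondegenerate[OF assms]) (auto simp: lvec_def levi_civita_def)
qed

lemma levi_civita_unitv:
  assumes "i \<in> lbasis n"
  shows "levi_civita n \<rho> (unitv i) w k =
    (if k \<in> lbasis n then \<Sum>j\<in>lbasis n. w j * christoffel \<rho> i j k else 0)"
proof -
  have "(\<Sum>i'\<in>lbasis n. \<Sum>j\<in>lbasis n. unitv i i' * w j * christoffel \<rho> i' j k) =
      (\<Sum>i'\<in>lbasis n. if i' = i then \<Sum>j\<in>lbasis n. w j * christoffel \<rho> i j k else 0)"
    unfolding unitv_def by (rule sum.cong) auto
  then show ?thesis using assms unfolding levi_civita_def by simp
qed

lemma levi_civita_in_lbasis:
  "k \<in> lbasis n \<Longrightarrow>
    levi_civita n \<rho> x y k = (\<Sum>i\<in>lbasis n. \<Sum>j\<in>lbasis n. x i * y j * christoffel \<rho> i j k)"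
  by (simp add: levi_civita_def)

lemma lbr_unitv:
  assumes "i \<in> lbasis n"
  shows "lbr n (unitv i) y k = (\<Sum>p\<in>lbasis n. y p * bb i p k)"
proof -
  have "lbr n (unitv i) y k = (\<Sum>i'\<in>lbasis n. if i' = i then \<Sum>p\<in>lbasis n. y p * bb i p k else 0)"
    unfolding lbr_def unitv_def by (rule sum.cong) auto
  then show ?thesis using assms by simp
qed

text \<open>Summand of \<open>Ric(e_p, e_q) = (\<Sum>i. (R(e_i, e_p) e_q)_i)\<close> after expanding the three terms of
  \<open>R\<close> in the basis: \<open>j\<close> indexes the intermediate vector \<open>nabla_(e_p) e_q\<close>, \<open>nabla_(e_i) e_q\<close>
  resp. \<open>[e_i, e_p]\<close>.\<close>

definition ricci_term :: "real \<Rightarrow> idx \<Rightarrow> idx \<Rightarrow> idx \<Rightarrow> idx \<Rightarrow> real" where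
  "ricci_term \<rho> p q i j =
     christoffel \<rho> p q j * christoffel \<rho> i j i - christoffel \<rho> i q j * christoffel \<rho> p j i
     - bb i p j * christoffel \<rho> j q i"

definition ricci_coeff :: "nat \<Rightarrow> real \<Rightarrow> idx \<Rightarrow> idx \<Rightarrow> real" where
  "ricci_coeff n \<rho> p q = (\<Sum>i\<in>lbasis n. \<Sum>j\<in>lbasis n. ricci_term \<rho> p q i j)"

lemma trace_levi_civita_outer:
  "(\<Sum>i\<in>lbasis n. levi_civita n \<rho> (unitv i) (levi_civita n \<rho> y z) i) =
    (\<Sum>p\<in>lbasis n. \<Sum>q\<in>lbasis n. y p * z q *
      (\<Sum>i\<in>lbasis n. \<Sum>j\<in>lbasis n. christoffel \<rho> p q j * christoffel \<rho> i j i))"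
  (is "?L = ?R")
proof -
  let ?A = "lbasis n"
  have "levi_civita n \<rho> (unitv i) (levi_civita n \<rho> y z) i = (\<Sum>j\<in>?A. \<Sum>p\<in>?A. \<Sum>q\<in>?A.
      y p * z q * (christoffel \<rho> p q j * christoffel \<rho> i j i))" if "i \<in> ?A" for i
  proof -
    have "levi_civita n \<rho> (unitv i) (levi_civita n \<rho> y z) i =
        (\<Sum>j\<in>?A. levi_civita n \<rho> y z j * christoffel \<rho> i j i)"
      using that by (simp add: levi_civita_unitv)
    also have "\<dots> = (\<Sum>j\<in>?A. \<Sum>p\<in>?A. \<Sum>q\<in>?A.
        y p * z q * (christoffel \<rho> p q j * christoffel \<rho> i j i))"
      by (intro sum.cong refl) (simp add: levi_civita_in_lbasis sum_distrib_right mult.assoc)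
    finally show ?thesis .
  qed
  then have "?L = (\<Sum>i\<in>?A. \<Sum>j\<in>?A. \<Sum>p\<in>?A. \<Sum>q\<in>?A.
      y p * z q * (christoffel \<rho> p q j * christoffel \<rho> i j i))"
    by (rule sum.cong[OF refl])
  also have "\<dots> = (\<Sum>p\<in>?A. \<Sum>q\<in>?A. \<Sum>i\<in>?A. \<Sum>j\<in>?A.
      y p * z q * (christoffel \<rho> p q j * christoffel \<rho> i j i))"
    by (rule sum_swap_pairs)
  also have "\<dots> = ?R"
    by (simp add: sum_distrib_left)
  finally show ?thesis .
qed

lemma trace_levi_civita_inner:
  "(\<Sum>i\<in>lbasis n. levi_civita n \<rho> y (levi_civita n \<rho> (unitv i) z) i) =
    (\<Sum>p\<in>lbasis n. \<Sum>q\<in>lbasis n. y p * z q *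
      (\<Sum>i\<in>lbasis n. \<Sum>j\<in>lbasis n. christoffel \<rho> i q j * christoffel \<rho> p j i))"
  (is "?L = ?R")
proof -
  let ?A = "lbasis n"
  have "?L = (\<Sum>i\<in>?A. \<Sum>p\<in>?A. \<Sum>j\<in>?A. \<Sum>q\<in>?A.
      y p * z q * (christoffel \<rho> i q j * christoffel \<rho> p j i))"
    by (intro sum.cong refl)
      (simp add: levi_civita_unitv levi_civita_def[of n \<rho> y] sum_distrib_left sum_distrib_right mult_ac
        cong: sum.cong)
  also have "\<dots> = (\<Sum>i\<in>?A. \<Sum>j\<in>?A. \<Sum>p\<in>?A. \<Sum>q\<in>?A.
      y p * z q * (christoffel \<rho> i q j * christoffel \<rho> p j i))"
    by (intro sum.cong refl sum.swap)
  also have "\<dots> = (\<Sum>p\<in>?A. \<Sum>q\<in>?A. \<Sum>i\<in>?A. \<Sum>j\<in>?A.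
      y p * z q * (christoffel \<rho> i q j * christoffel \<rho> p j i))"
    by (rule sum_swap_pairs)
  also have "\<dots> = ?R"
    by (simp add: sum_distrib_left)
  finally show ?thesis .
qed

lemma trace_levi_civita_bracket:
  "(\<Sum>i\<in>lbasis n. levi_civita n \<rho> (lbr n (unitv i) y) z i) =
    (\<Sum>p\<in>lbasis n. \<Sum>q\<in>lbasis n. y p * z q *
      (\<Sum>i\<in>lbasis n. \<Sum>j\<in>lbasis n. bb i p j * christoffel \<rho> j q i))"
  (is "?L = ?R")
proof -
  let ?A = "lbasis n"
  have "?L = (\<Sum>i\<in>?A. \<Sum>j\<in>?A. \<Sum>q\<in>?A. \<Sum>p\<in>?A.
      y p * z q * (bb i p j * christoffel \<rho> j q i))"
    by (intro sum.cong refl)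
      (simp add: lbr_unitv levi_civita_def sum_distrib_left sum_distrib_right mult_ac)
  also have "\<dots> = (\<Sum>i\<in>?A. \<Sum>j\<in>?A. \<Sum>p\<in>?A. \<Sum>q\<in>?A.
      y p * z q * (bb i p j * christoffel \<rho> j q i))"
    by (intro sum.cong refl sum.swap)
  also have "\<dots> = (\<Sum>p\<in>?A. \<Sum>q\<in>?A. \<Sum>i\<in>?A. \<Sum>j\<in>?A.
      y p * z q * (bb i p j * christoffel \<rho> j q i))"
    by (rule sum_swap_pairs)
  also have "\<dots> = ?R"
    by (simp add: sum_distrib_left)
  finally show ?thesis .
qed

lemma ricci_eq_ricci_coeff:
  assumes "\<rho> > 0"
  shows "ricci n \<rho> 0 y z = (\<Sum>p\<in>lbasis n. \<Sum>q\<in>lbasis n. y p * z q * ricci_coeff n \<rho> p q)"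
  unfolding ricci_def riem_def nabla_eq_levi_civita[OF assms] sum_subtractf
    trace_levi_civita_outer trace_levi_civita_inner trace_levi_civita_bracket
  by (simp add: ricci_coeff_def ricci_term_def sum_subtractf right_diff_distrib)

lemma ricop_eq_diagonal:
  assumes "\<rho> > 0" and "x \<in> lvec n"
    and ricci_diag: "\<And>p q. p \<in> lbasis n \<Longrightarrow> q \<in> lbasis n \<Longrightarrow>
      ricci_coeff n \<rho> p q = (if p = q then r p * gram_diag \<rho> p else 0)"
  shows "ricop n \<rho> 0 x = (\<lambda>v. r v * x v)"
proof -
  let ?A = "lbasis n"
  have ricci_x: "ricci n \<rho> 0 x z = gmet n \<rho> 0 (\<lambda>v. r v * x v) z" for z
  proof -
    have "ricci n \<rho> 0 x z = (\<Sum>p\<in>?A. \<Sum>q\<in>?A. if q = p then x p * z p * (r p * gram_diag \<rho> p) else 0)"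
      unfolding ricci_eq_ricci_coeff[OF assms(1)] by (intro sum.cong refl) (auto simp: ricci_diag)
    also have "\<dots> = gmet n \<rho> 0 (\<lambda>v. r v * x v) z"
      unfolding gmet_diagonal by (simp add: mult_ac)
    finally show ?thesis .
  qed
  show ?thesis
    unfolding ricop_def
  proof (rule the_equality)
    show "(\<lambda>v. r v * x v) \<in> lvec n \<and> (\<forall>z\<in>lvec n. gmet n \<rho> 0 (\<lambda>v. r v * x v) z = ricci n \<rho> 0 x z)"
      using assms(2) by (simp add: lvec_def ricci_x)
  next
    fix w
    assume "w \<in> lvec n \<and> (\<forall>z\<in>lvec n. gmet n \<rho> 0 w z = ricci n \<rho> 0 x z)"
    then show "w = (\<lambda>v. r v * x v)"
      using assms(2) by (intro gmet_nondegenerate[OF assms(1)]) (auto simp: lvec_def ricci_x)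
  qed
qed

lemma is_derivation_diagonal:
  assumes graded: "\<And>i j k. bb i j k \<noteq> 0 \<Longrightarrow> w k = w i + w j"
  shows "is_derivation n (\<lambda>x v. w v * x v)"
  unfolding is_derivation_def
proof (intro conjI ballI allI)
  fix x
  assume "x \<in> lvec n"
  then show "(\<lambda>v. w v * x v) \<in> lvec n" by (simp add: lvec_def)
next
  fix x y :: "idx \<Rightarrow> real" and a b :: real
  show "(\<lambda>v. w v * (a * x v + b * y v)) = (\<lambda>v. a * (w v * x v) + b * (w v * y v))"
    by (simp add: algebra_simps)
next
  fix x y :: "idx \<Rightarrow> real"
  have weight: "bb i j v * w v = bb i j v * (w i + w j)" for i j v
    using graded[of i j v] by (cases "bb i j v = 0") simp_all
  show "(\<lambda>v. w v * lbr n x y v) = (\<lambda>v. lbr n (\<lambda>v. w v * x v) y v + lbr n x (\<lambda>v. w v * y v) v)"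
  proof
    fix v
    have "w v * lbr n x y v = (\<Sum>i\<in>lbasis n. \<Sum>j\<in>lbasis n. x i * y j * (bb i j v * w v))"
      unfolding lbr_def sum_distrib_left by (simp add: mult_ac)
    also have "\<dots> = (\<Sum>i\<in>lbasis n. \<Sum>j\<in>lbasis n.
        w i * x i * y j * bb i j v + x i * (w j * y j) * bb i j v)"
      unfolding weight by (simp add: algebra_simps)
    also have "\<dots> = lbr n (\<lambda>v. w v * x v) y v + lbr n x (\<lambda>v. w v * y v) v"
      unfolding lbr_def by (simp add: sum.distrib)
    finally show "w v * lbr n x y v = lbr n (\<lambda>v. w v * x v) y v + lbr n x (\<lambda>v. w v * y v) v" .
  qed
qed

fun heis_degree :: "idx \<Rightarrow> nat" where
  "heis_degree (Ee _) = 1"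
| "heis_degree (Ff _) = 1"
| "heis_degree Zz = 2"
| "heis_degree _ = 0"

lemma bb_heis_degree: "bb i j k \<noteq> 0 \<Longrightarrow> heis_degree k = heis_degree i + heis_degree j"
  by (cases i; cases j; cases k) (auto simp: bb_def mixE_def mixF_def unitv_def split: if_splits)

definition block :: "nat \<Rightarrow> idx set" where
  "block c = {BR (Suc (Suc c)), BI (Suc (Suc c)), Ee (Suc (Suc c)), Ff (Suc (Suc c))}"

lemma bb_block_parity: "bb i j k \<noteq> 0 \<Longrightarrow> (k \<in> block c) = ((i \<in> block c) \<noteq> (j \<in> block c))"
  by (cases i; cases j; cases k) (auto simp: bb_def mixE_def mixF_def unitv_def block_def split: if_splits)

lemma christoffel_block_parity:
  "christoffel \<rho> i j k \<noteq> 0 \<Longrightarrow> (k \<in> block c) = ((i \<in> block c) \<noteq> (j \<in> block c))"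
  unfolding christoffel_def
  using bb_block_parity[of i j k c] bb_block_parity[of j k i c] bb_block_parity[of k i j c]
  by fastforce

lemma ricci_term_nonzero:
  "ricci_term \<rho> p q i j \<noteq> 0 \<Longrightarrow>
    christoffel \<rho> p q j \<noteq> 0 \<and> christoffel \<rho> i j i \<noteq> 0 \<or>
    christoffel \<rho> i q j \<noteq> 0 \<and> christoffel \<rho> p j i \<noteq> 0 \<or>
    bb i p j \<noteq> 0 \<and> christoffel \<rho> j q i \<noteq> 0"
  unfolding ricci_term_def by auto

lemma ricci_term_block_parity:
  "ricci_term \<rho> p q i j \<noteq> 0 \<Longrightarrow> (p \<in> block c) = (q \<in> block c)"
  using ricci_term_nonzero[of \<rho> p q i j]
    christoffel_block_parity[of \<rho> p q j c] christoffel_block_parity[of \<rho> i j i c]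
    christoffel_block_parity[of \<rho> i q j c] christoffel_block_parity[of \<rho> p j i c]
    bb_block_parity[of i p j c] christoffel_block_parity[of \<rho> j q i c]
  by blast

lemma ricci_coeff_block_parity:
  "(p \<in> block c) \<noteq> (q \<in> block c) \<Longrightarrow> ricci_coeff n \<rho> p q = 0"
  unfolding ricci_coeff_def using ricci_term_block_parity by (metis (mono_tags) sum.neutral)

lemma block_disjoint: "c \<noteq> d \<Longrightarrow> block c \<inter> block d = {}"
  by (auto simp: block_def)

lemma ricci_term_cross_blocks:
  assumes "c \<noteq> d" "i \<in> block c" "j \<in> block d"
  shows "ricci_term \<rho> p q i j = 0"
proof (rule ccontr)
  assume "ricci_term \<rho> p q i j \<noteq> 0"
  moreover have "i \<notin> block d" "j \<notin> block c"
    "p \<notin> block c \<or> p \<notin> block d" "q \<notin> block c \<or> q \<notin> block d"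
    using assms block_disjoint by blast+
  ultimately show False
    using ricci_term_nonzero[of \<rho> p q i j] assms(2,3)
      christoffel_block_parity[of \<rho> i j i d] christoffel_block_parity[of \<rho> i q j c]
      christoffel_block_parity[of \<rho> i q j d] bb_block_parity[of i p j c] bb_block_parity[of i p j d]
    by blast
qed

definition core :: "idx set" where
  "core = {BR 1, BI 1, Ee 0, Ff 0, Ee 1, Ff 1, Zz}"

lemma core_block_disjoint: "core \<inter> block c = {}"
  by (auto simp: core_def block_def)

lemma in_core_iff:
  "p \<in> core \<longleftrightarrow> p = BR 1 \<or> p = BI 1 \<or> p = Ee 0 \<or> p = Ff 0 \<or> p = Ee 1 \<or> p = Ff 1 \<or> p = Zz"
  by (simp add: core_def)

lemma in_block_iff:
  "p \<in> block c \<longleftrightarrow>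
    p = BR (Suc (Suc c)) \<or> p = BI (Suc (Suc c)) \<or> p = Ee (Suc (Suc c)) \<or> p = Ff (Suc (Suc c))"
  by (simp add: block_def)

lemma sum_core: "sum f core = f (BR 1) + f (BI 1) + f (Ee 0) + f (Ff 0) + f (Ee 1) + f (Ff 1) + f Zz"
  by (simp add: core_def add_ac)

lemma sum_block:
  "sum f (block c) = f (BR (Suc (Suc c))) + f (BI (Suc (Suc c))) + f (Ee (Suc (Suc c))) + f (Ff (Suc (Suc c)))"
  by (simp add: block_def add_ac)

lemma lbasis_Suc_Suc: "lbasis (Suc (Suc m)) = core \<union> (\<Union>c<m. block c)"
proof
  show "lbasis (Suc (Suc m)) \<subseteq> core \<union> (\<Union>c<m. block c)"
  proof
    fix p
    assume p: "p \<in> lbasis (Suc (Suc m))"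
    have shift: "a \<le> 1" if "\<forall>c\<in>{..<m}. a \<noteq> Suc (Suc c)" "a < Suc (Suc m)" for a
    proof (rule ccontr)
      assume "\<not> a \<le> 1"
      then have "a - 2 \<in> {..<m}" "a = Suc (Suc (a - 2))" using that(2) by auto
      with that(1) show False by blast
    qed
    show "p \<in> core \<union> (\<Union>c<m. block c)"
      using p by (cases p) (auto simp: lbasis_def core_def block_def dest!: shift)
  qed
qed (auto simp: lbasis_def core_def block_def)

lemma sum_lbasis_Suc_Suc:
  "sum f (lbasis (Suc (Suc m))) = sum f core + (\<Sum>c<m. sum f (block c))"
proof -
  have "finite core" "\<And>c. finite (block c)" by (simp_all add: core_def block_def)
  moreover have "core \<inter> (\<Union>c<m. block c) = {}"
    by (auto simp: core_def block_def)
  moreover have "sum f (\<Union>c<m. block c) = (\<Sum>c<m. sum f (block c))"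
    by (rule sum.UNION_disjoint) (auto simp: block_def)
  ultimately show ?thesis
    unfolding lbasis_Suc_Suc by (simp add: sum.union_disjoint)
qed

definition block_contrib :: "real \<Rightarrow> idx \<Rightarrow> idx \<Rightarrow> nat \<Rightarrow> real" where
  "block_contrib \<rho> p q c =
     (\<Sum>i\<in>core. \<Sum>j\<in>block c. ricci_term \<rho> p q i j) + (\<Sum>i\<in>block c. \<Sum>j\<in>core. ricci_term \<rho> p q i j)
     + (\<Sum>i\<in>block c. \<Sum>j\<in>block c. ricci_term \<rho> p q i j)"

lemma ricci_coeff_Suc_Suc:
  "ricci_coeff (Suc (Suc m)) \<rho> p q =
    (\<Sum>i\<in>core. \<Sum>j\<in>core. ricci_term \<rho> p q i j) + (\<Sum>c<m. block_contrib \<rho> p q c)"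
proof -
  let ?S = "\<lambda>I J. \<Sum>i\<in>I. \<Sum>j\<in>J. ricci_term \<rho> p q i j"
  have diagonal: "(\<Sum>d<m. ?S (block c) (block d)) = ?S (block c) (block c)" if "c < m" for c
  proof -
    have "?S (block c) (block d) = 0" if "d \<noteq> c" for d
      using ricci_term_cross_blocks[OF that[symmetric]] by (simp add: sum.neutral)
    then show ?thesis using that by (simp add: sum.remove[of "{..<m}" c] sum.neutral)
  qed
  have "ricci_coeff (Suc (Suc m)) \<rho> p q = ?S core core + (\<Sum>d<m. ?S core (block d))
      + ((\<Sum>c<m. ?S (block c) core) + (\<Sum>c<m. \<Sum>d<m. ?S (block c) (block d)))"
    unfolding ricci_coeff_def sum_lbasis_Suc_Suc sum.distrib
    by (simp add: sum.swap[of _ core "{..<m}"] sum.swap[of _ "block _" "{..<m}"])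
  also have "(\<Sum>c<m. \<Sum>d<m. ?S (block c) (block d)) = (\<Sum>c<m. ?S (block c) (block c))"
    by (rule sum.cong) (simp_all add: diagonal)
  finally show ?thesis
    unfolding block_contrib_def sum.distrib by simp
qed

lemmas ricci_term_eval = ricci_term_def christoffel_def gram_diag_simps bb_def mixE_def mixF_def
  unitv_def if_distribR sum_core sum_block

definition ricci_eigenvalue :: "nat \<Rightarrow> idx \<Rightarrow> real" where
  "ricci_eigenvalue n v = - 2 * (real n + 2) + (2 * real n + 2) * real (heis_degree v)"

lemma block_contrib_core_indep:
  "\<rho> > 0 \<Longrightarrow> p \<in> core \<Longrightarrow> q \<in> core \<Longrightarrow> block_contrib \<rho> p q c = block_contrib \<rho> p q 0"
  apply (simp only: in_core_iff)
  apply (elim disjE)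
  apply (simp_all add: block_contrib_def ricci_term_eval)
  done

lemma ricci_coeff_core_eval:
  "\<rho> > 0 \<Longrightarrow> p \<in> core \<Longrightarrow> q \<in> core \<Longrightarrow>
    (\<Sum>i\<in>core. \<Sum>j\<in>core. ricci_term \<rho> p q i j) + real m * block_contrib \<rho> p q 0 =
    (if p = q then ricci_eigenvalue (Suc (Suc m)) p * gram_diag \<rho> p else 0)"
  apply (simp only: in_core_iff)
  apply (elim disjE)
  apply (simp_all add: block_contrib_def ricci_term_eval ricci_eigenvalue_def field_simps)
  apply (simp_all add: algebra_simps power2_eq_square eval_nat_numeral)
  done

lemma block_contrib_block_indep:
  "\<rho> > 0 \<Longrightarrow> p \<in> block c \<Longrightarrow> q \<in> block c \<Longrightarrow> d \<noteq> c \<Longrightarrow>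
    block_contrib \<rho> p q d = block_contrib \<rho> p q (Suc c)"
  apply (simp only: in_block_iff)
  apply (elim disjE)
  apply (simp_all add: block_contrib_def ricci_term_eval)
  done

lemma ricci_coeff_block_eval:
  "\<rho> > 0 \<Longrightarrow> p \<in> block c \<Longrightarrow> q \<in> block c \<Longrightarrow>
    (\<Sum>i\<in>core. \<Sum>j\<in>core. ricci_term \<rho> p q i j) + block_contrib \<rho> p q c
      + (real m - 1) * block_contrib \<rho> p q (Suc c) =
    (if p = q then ricci_eigenvalue (Suc (Suc m)) p * gram_diag \<rho> p else 0)"
  apply (simp only: in_block_iff)
  apply (elim disjE)
  apply (simp_all add: block_contrib_def ricci_term_eval ricci_eigenvalue_def field_simps)
  apply (simp_all add: algebra_simps power2_eq_square eval_nat_numeral)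
  done

lemma ricci_coeff_core:
  assumes "\<rho> > 0" "p \<in> core" "q \<in> core"
  shows "ricci_coeff (Suc (Suc m)) \<rho> p q =
    (if p = q then ricci_eigenvalue (Suc (Suc m)) p * gram_diag \<rho> p else 0)"
proof -
  have "(\<Sum>c<m. block_contrib \<rho> p q c) = (\<Sum>c<m. block_contrib \<rho> p q 0)"
    by (rule sum.cong[OF refl], rule block_contrib_core_indep[OF assms])
  then show ?thesis
    using ricci_coeff_core_eval[OF assms] by (simp add: ricci_coeff_Suc_Suc)
qed

lemma ricci_coeff_block:
  assumes "\<rho> > 0" "c < m" "p \<in> block c" "q \<in> block c"
  shows "ricci_coeff (Suc (Suc m)) \<rho> p q =
    (if p = q then ricci_eigenvalue (Suc (Suc m)) p * gram_diag \<rho> p else 0)"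
proof -
  have "(\<Sum>d<m. block_contrib \<rho> p q d) =
      block_contrib \<rho> p q c + (\<Sum>d\<in>{..<m} - {c}. block_contrib \<rho> p q d)"
    using assms(2) by (simp add: sum.remove)
  also have "(\<Sum>d\<in>{..<m} - {c}. block_contrib \<rho> p q d) =
      (\<Sum>d\<in>{..<m} - {c}. block_contrib \<rho> p q (Suc c))"
    by (rule sum.cong[OF refl], rule block_contrib_block_indep[OF assms(1,3,4)]) simp
  also have "\<dots> = (real m - 1) * block_contrib \<rho> p q (Suc c)"
    using assms(2) by simp
  finally show ?thesis
    using ricci_coeff_block_eval[OF assms(1,3,4), of m] by (simp add: ricci_coeff_Suc_Suc)
qed

lemma ricci_coeff_diagonal:
  assumes "\<rho> > 0" "p \<in> lbasis (Suc (Suc m))" "q \<in> lbasis (Suc (Suc m))"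
  shows "ricci_coeff (Suc (Suc m)) \<rho> p q =
    (if p = q then ricci_eigenvalue (Suc (Suc m)) p * gram_diag \<rho> p else 0)"
proof -
  consider "p \<in> core" "q \<in> core"
    | c where "c < m" "(p \<in> block c) \<noteq> (q \<in> block c)"
    | c where "c < m" "p \<in> block c" "q \<in> block c"
    using assms(2,3) core_block_disjoint block_disjoint unfolding lbasis_Suc_Suc by blast
  then show ?thesis
  proof cases
    case 1
    then show ?thesis using ricci_coeff_core[OF assms(1)] by blast
  next
    case (2 c)
    then have "p \<noteq> q" by blast
    with 2 show ?thesis using ricci_coeff_block_parity by simp
  next
    case (3 c)
    then show ?thesis using ricci_coeff_block[OF assms(1)] by blast
  qed
qed

theorem theorem4p11:
  fixes n :: nat and \<rho> :: real
  assumes "n > 1" and "\<rho> > 0"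
  shows "\<exists>(lam::real) D. is_derivation n D \<and>
           (\<forall>x\<in>lvec n. ricop n \<rho> 0 x = (\<lambda>v. lam * x v + D x v))"
proof -
  obtain m where n: "n = Suc (Suc m)"
    using assms(1) less_iff_Suc_add by auto
  let ?D = "\<lambda>x v. (2 * real n + 2) * real (heis_degree v) * x v"
  have "is_derivation n ?D"
    by (rule is_derivation_diagonal) (simp add: bb_heis_degree algebra_simps)
  moreover have "ricop n \<rho> 0 x = (\<lambda>v. - 2 * (real n + 2) * x v + ?D x v)" if "x \<in> lvec n" for x
  proof -
    have "ricop n \<rho> 0 x = (\<lambda>v. ricci_eigenvalue n v * x v)"
      using assms(2) that unfolding n by (rule ricop_eq_diagonal) (rule ricci_coeff_diagonal[OF assms(2)])
    then show ?thesis by (simp add: ricci_eigenvalue_def algebra_simps)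
  qed
  ultimately show ?thesis by blast
qed

end
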